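(* Let $f\in\mathbb{R}[X_1,\dots,X_n]$ be a form (homogeneous polynomial) of degree $2d$. Suppose there exist nonnegative real numbers $a_{\alpha,i}$, for $\alpha\in\Delta$ and $i=1,\dots,n$, such that, writing $a_\alpha:=(a_{\alpha,1},\dots,a_{\alpha,n})$, (1) for every $\alpha\in\Delta$: $(2d)^{2d}a_{\alpha}^{\alpha}=f_{\alpha}^{2d}\alpha^{\alpha}$; and (2) $f_{2d,i}\ge\sum_{\alpha\in\Delta}a_{\alpha,i}$ for $i=1,\dots,n$. Then $f$ is SOBS.
   Context: $\mathbb{N}=\{0,1,2,\dots\}$, $n\ge1$, $\underline{X}=(X_1,\dots,X_n)$. For $\alpha\in\mathbb{N}^n$ write $\underline{X}^\alpha=X_1^{\alpha_1}\cdots X_n^{\alpha_n}$, $|\alpha|=\alpha_1+\cdots+\alpha_n$, and for $a=(a_1,\dots,a_n)\in\mathbb{R}^n$ write $a^\alpha=\prod_{i=1}^n a_i^{\alpha_i}$ with the convention $0^0=1$ (so $\alpha^\alpha=\prod_i\alpha_i^{\alpha_i}$). For $f=\sum_\alpha f_\alpha\underline{X}^\alpha$ of degree $2d$, let $\epsilon_i$ be the $i$-th standard unit vector, $f_{2d,i}:=f_{2d\epsilon_i}$ (the coefficient of $X_i^{2d}$), $\Omega=\{\alpha\in\mathbb{N}^n: f_\alpha\ne0\}\setminus\{\underline{0},2d\epsilon_1,\dots,2d\epsilon_n\}$, and $\Delta=\{\alpha\in\Omega:\ f_\alpha<0\text{ or }\alpha_i\text{ is odd for some }i\}$ (the $\alpha\in\Omega$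 for which $f_\alpha\underline{X}^\alpha$ is not a square). A polynomial is SOBS (a sum of binomial squares) if it is a finite sum of squares of polynomials of the form $a\underline{X}^\alpha-b\underline{X}^\beta$ with $a,b\in\mathbb{R}$, $\alpha,\beta\in\mathbb{N}^n$. *)

theory Defs
  imports Complex_Main "HOL-Library.Poly_Mapping"
begin

text \<open>Multivariate real polynomials in variables X_0, ..., X_(n-1) are represented as
  finitely supported maps from exponent vectors to coefficients;
  multiplication is the convolution product of Poly_Mapping.
  The monomial a X^alpha is Poly_Mapping.single alpha a.\<close>

type_synonym mpoly = "(nat \<Rightarrow>\<^sub>0 nat) \<Rightarrow>\<^sub>0 real"

definition mdeg :: "(nat \<Rightarrow>\<^sub>0 nat) \<Rightarrow> nat" where
  "mdeg \<alpha> = (\<Sum>i\<in>Poly_Mapping.keys \<alpha>. Poly_Mapping.lookup \<alpha> i)"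

definition in_vars :: "nat \<Rightarrow> (nat \<Rightarrow>\<^sub>0 nat) \<Rightarrow> bool" where
  "in_vars n \<alpha> \<longleftrightarrow> Poly_Mapping.keys \<alpha> \<subseteq> {..<n}"

definition is_poly_in :: "nat \<Rightarrow> mpoly \<Rightarrow> bool" where
  "is_poly_in n f \<longleftrightarrow> (\<forall>\<alpha>\<in>Poly_Mapping.keys f. in_vars n \<alpha>)"

definition is_form :: "nat \<Rightarrow> mpoly \<Rightarrow> bool" where
  "is_form k f \<longleftrightarrow> (\<forall>\<alpha>\<in>Poly_Mapping.keys f. mdeg \<alpha> = k)"

text \<open>Omega and Delta of the paper (variables indexed 0..n-1)\<close>
definition Omega :: "nat \<Rightarrow> nat \<Rightarrow> mpoly \<Rightarrow> (nat \<Rightarrow>\<^sub>0 nat) set" where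
  "Omega n d f = Poly_Mapping.keys f - ({0} \<union> {Poly_Mapping.single i (2*d) | i. i < n})"

definition Delta :: "nat \<Rightarrow> nat \<Rightarrow> mpoly \<Rightarrow> (nat \<Rightarrow>\<^sub>0 nat) set" where
  "Delta n d f = {\<alpha>\<in>Omega n d f. Poly_Mapping.lookup f \<alpha> < 0 \<or> (\<exists>i. odd (Poly_Mapping.lookup \<alpha> i))}"

text \<open>a^alpha = prod_i a_i^alpha_i, with 0^0 = 1 (as for Isabelle's power)\<close>
definition vpow :: "nat \<Rightarrow> (nat \<Rightarrow> real) \<Rightarrow> (nat \<Rightarrow>\<^sub>0 nat) \<Rightarrow> real" where
  "vpow n a \<alpha> = (\<Prod>i<n. a i ^ Poly_Mapping.lookup \<alpha> i)"

definition SOBS :: "nat \<Rightarrow> mpoly \<Rightarrow> bool" where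
  "SOBS n f \<longleftrightarrow> (\<exists>L :: (real \<times> (nat \<Rightarrow>\<^sub>0 nat) \<times> real \<times> (nat \<Rightarrow>\<^sub>0 nat)) list.
     (\<forall>(a, \<alpha>, b, \<beta>)\<in>set L. in_vars n \<alpha> \<and> in_vars n \<beta>) \<and>
     f = (\<Sum>(a, \<alpha>, b, \<beta>)\<leftarrow>L. (Poly_Mapping.single \<alpha> a - Poly_Mapping.single \<beta> b)^2))"

end

theory Submission
  imports Defs
begin

text \<open>
  The hypotheses split f as
    \<Sum>_i (f_{2d,i} - \<Sum>_\<alpha> a_{\<alpha>,i}) X_i^{2d} + \<Sum>_{\<beta> \<in> \<Omega> - \<Delta>} f_\<beta> X^\<beta>
      + \<Sum>_{\<alpha> \<in> \<Delta>} (\<Sum>_i a_{\<alpha>,i} X_i^{2d} + f_\<alpha> X^\<alpha>),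
  where the first two sums consist of nonnegative multiples of monomials with even exponents,
  i.e. of squares. For \<alpha> \<in> \<Delta> choose s_i with \<alpha>_i s_i^{2d} = a_{\<alpha>,i} and, if f_\<alpha> > 0, flip
  the sign of one s_i with \<alpha>_i odd. Condition (1) then says exactly that the agiform
  \<Sum>_i a_{\<alpha>,i} X_i^{2d} + f_\<alpha> X^\<alpha> is Hurwitz's form \<Sum>_j u_j^{2d} - 2d \<Prod>_j u_j in the 2d monomials
  u_j = s_i X_i (X_i repeated \<alpha>_i times). Hurwitz's inductive proof of the AM-GM inequality
  writes this form as a positive combination of binomial squares in the u_j, hence in X.
\<close>

section \<open>Hurwitz's identity\<close>

definition amgm_defect :: "'b set \<Rightarrow> ('b \<Rightarrow> 'a::comm_ring_1) \<Rightarrow> 'a" where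
  "amgm_defect J x = (\<Sum>j\<in>J. x j ^ card J) - of_nat (card J) * (\<Prod>j\<in>J. x j)"

text \<open>
  For x = u^2 the right-hand side is a sum of squares times smaller defects and of products
  (v^2 - w^2)((v^2)^m - (w^2)^m), which are binomial squares times sums of squares.
\<close>

lemma amgm_defect_recursion:
  fixes x :: "'b \<Rightarrow> 'a::comm_ring_1"
  assumes fin: "finite J" and card: "card J = Suc m"
  shows "of_nat (2 * m) * amgm_defect J x
    = 2 * (\<Sum>i\<in>J. x i * amgm_defect (J - {i}) x)
      + (\<Sum>i\<in>J. \<Sum>j\<in>J. (x i - x j) * (x i ^ m - x j ^ m))"
proof -
  define Q where "Q = (\<Sum>j\<in>J. x j ^ Suc m)"
  define D where "D = (\<Sum>i\<in>J. \<Sum>j\<in>J. x i * x j ^ m)"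
  have "x i * amgm_defect (J - {i}) x
      = (\<Sum>j\<in>J. x i * x j ^ m) - x i ^ Suc m - of_nat m * prod x J" if "i \<in> J" for i
  proof -
    have "(\<Sum>j\<in>J. x i * x j ^ m) = x i * x i ^ m + x i * (\<Sum>j\<in>J - {i}. x j ^ m)"
      using sum.remove[OF fin that] by (simp add: sum_distrib_left)
    moreover have "prod x J = x i * prod x (J - {i})"
      by (rule prod.remove[OF fin that])
    ultimately show ?thesis
      using that fin card by (simp add: amgm_defect_def algebra_simps)
  qed
  then have A: "(\<Sum>i\<in>J. x i * amgm_defect (J - {i}) x) = D - Q - of_nat (Suc m) * (of_nat m * prod x J)"
    using card by (simp add: D_def Q_def sum_subtractf)
  have "(\<Sum>i\<in>J. \<Sum>j\<in>J. (x i - x j) * (x i ^ m - x j ^ m))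
      = (\<Sum>i\<in>J. \<Sum>j\<in>J. x i ^ Suc m) + (\<Sum>i\<in>J. \<Sum>j\<in>J. x j ^ Suc m)
        - (D + (\<Sum>i\<in>J. \<Sum>j\<in>J. x j * x i ^ m))"
    unfolding D_def by (simp add: algebra_simps sum_subtractf sum.distrib)
  also have "(\<Sum>i\<in>J. \<Sum>j\<in>J. x j * x i ^ m) = D"
    unfolding D_def by (rule sum.swap)
  also have "(\<Sum>i\<in>J. \<Sum>j\<in>J. x i ^ Suc m) = of_nat (Suc m) * Q"
    unfolding Q_def using card by (simp add: sum_distrib_left)
  also have "(\<Sum>i\<in>J. \<Sum>j\<in>J. x j ^ Suc m) = of_nat (Suc m) * Q"
    unfolding Q_def using card by simp
  finally have B: "(\<Sum>i\<in>J. \<Sum>j\<in>J. (x i - x j) * (x i ^ m - x j ^ m))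
      = 2 * of_nat (Suc m) * Q - 2 * D"
    by (simp add: algebra_simps)
  have defect: "amgm_defect J x = Q - of_nat (Suc m) * prod x J"
    using card by (simp add: amgm_defect_def Q_def)
  show ?thesis
    unfolding A B defect by (simp add: algebra_simps)
qed

text \<open>The closure properties of SOBS used by Hurwitz's argument; T stands for the monomials.\<close>

locale binomial_square_cone =
  fixes P :: "'a::comm_ring_1 \<Rightarrow> bool" and T :: "'a set"
  assumes zero_closed: "P 0"
    and add_closed: "P a \<Longrightarrow> P b \<Longrightarrow> P (a + b)"
    and of_nat_mult_cancel: "k > 0 \<Longrightarrow> P (of_nat k * a) \<Longrightarrow> P a"
    and square_mult_closed: "w \<in> T \<Longrightarrow> P a \<Longrightarrow> P (w^2 * a)"
    and binomial_square: "v \<in> T \<Longrightarrow> w \<in> T \<Longrightarrow> P ((v - w)^2)"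
    and one_mem: "1 \<in> T"
    and mult_mem: "v \<in> T \<Longrightarrow> w \<in> T \<Longrightarrow> v * w \<in> T"
begin

lemma sum_closed: "(\<And>x. x \<in> A \<Longrightarrow> P (g x)) \<Longrightarrow> P (sum g A)"
  by (induction A rule: infinite_finite_induct) (auto intro: zero_closed add_closed)

lemma of_nat_mult_closed: "P a \<Longrightarrow> P (of_nat k * a)"
  by (induction k) (auto simp: algebra_simps intro: zero_closed add_closed)

lemma power_mem: "v \<in> T \<Longrightarrow> v ^ k \<in> T"
  by (induction k) (auto intro: one_mem mult_mem)

lemma prod_mem: "(\<And>x. x \<in> A \<Longrightarrow> g x \<in> T) \<Longrightarrow> prod g A \<in> T"
  by (induction A rule: infinite_finite_induct) (auto intro: one_mem mult_mem)

lemma diff_squares_mult_diff_powers: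
  assumes "v \<in> T" "w \<in> T"
  shows "P ((v^2 - w^2) * ((v^2)^m - (w^2)^m))"
proof -
  have "(v^2 - w^2) * ((v^2)^m - (w^2)^m) = (\<Sum>i<m. (w^(m - Suc i) * v^i)^2 * (v * v - w * w)^2)"
    unfolding power_diff_sumr2[of "v^2" m "w^2"]
    by (simp add: sum_distrib_left power_mult_distrib power_mult[symmetric] power2_eq_square
        mult.commute mult.left_commute mult.assoc)
  moreover have "P (\<Sum>i<m. (w^(m - Suc i) * v^i)^2 * (v * v - w * w)^2)"
    by (intro sum_closed square_mult_closed binomial_square mult_mem power_mem assms)
  ultimately show ?thesis by simp
qed

lemma amgm_defect_squares:
  "finite J \<Longrightarrow> u ` J \<subseteq> T \<Longrightarrow> P (amgm_defect J (\<lambda>j. (u j)^2))"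
proof (induction "card J" arbitrary: J rule: less_induct)
  case less
  show ?case
  proof (cases "card J \<le> 1")
    case True
    then have "J = {} \<or> (\<exists>j. J = {j})"
      using card_1_singletonE less.prems(1) by (auto simp: le_Suc_eq)
    then show ?thesis
      using zero_closed by (auto simp: amgm_defect_def)
  next
    case False
    then obtain m where m: "card J = Suc m" "m \<ge> 1"
      by (metis Suc_le_D le_Suc_eq not_less_eq_eq)
    let ?x = "\<lambda>j. (u j)^2"
    have "P (\<Sum>i\<in>J. ?x i * amgm_defect (J - {i}) ?x)"
      using less m by (intro sum_closed square_mult_closed less.hyps) auto
    moreover have "P (\<Sum>i\<in>J. \<Sum>j\<in>J. (?x i - ?x j) * (?x i ^ m - ?x j ^ m))"
      using less.prems by (intro sum_closed diff_squares_mult_diff_powers) auto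
    ultimately have "P (2 * (\<Sum>i\<in>J. ?x i * amgm_defect (J - {i}) ?x)
        + (\<Sum>i\<in>J. \<Sum>j\<in>J. (?x i - ?x j) * (?x i ^ m - ?x j ^ m)))"
      unfolding mult_2 by (intro add_closed)
    then have "P (of_nat (2 * m) * amgm_defect J ?x)"
      unfolding amgm_defect_recursion[OF less.prems(1) m(1)] .
    then show ?thesis
      by (rule of_nat_mult_cancel[rotated]) (use m(2) in simp)
  qed
qed

lemma amgm_defect_even_card:
  fixes u :: "nat \<Rightarrow> 'a" and d :: nat
  assumes "u ` {0..<2*d} \<subseteq> T"
  shows "P (amgm_defect {0..<2*d} u)"
proof -
  let ?A = "{0..<d}" and ?B = "{d..<2*d}"
  have half: "amgm_defect K (\<lambda>j. (u j)^2) = (\<Sum>j\<in>K. u j ^ (2*d)) - of_nat d * (prod u K)^2"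
    if "card K = d" for K
    using that by (simp add: amgm_defect_def power_mult prod_power_distrib)
  have "amgm_defect {0..<2*d} u = (\<Sum>j\<in>{0..<2*d}. u j ^ (2*d)) - of_nat (2*d) * prod u {0..<2*d}"
    by (simp add: amgm_defect_def)
  also have "(\<Sum>j\<in>{0..<2*d}. u j ^ (2*d)) = (\<Sum>j\<in>?A. u j ^ (2*d)) + (\<Sum>j\<in>?B. u j ^ (2*d))"
    by (rule sum.atLeastLessThan_concat[symmetric]) auto
  also have "prod u {0..<2*d} = prod u ?A * prod u ?B"
    by (rule prod.atLeastLessThan_concat[symmetric]) auto
  finally have "amgm_defect {0..<2*d} u = amgm_defect ?A (\<lambda>j. (u j)^2) + amgm_defect ?B (\<lambda>j. (u j)^2)
      + of_nat d * (prod u ?A - prod u ?B)^2"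
    unfolding half[of ?A, simplified] half[of ?B, simplified] by (simp add: power2_eq_square algebra_simps)
  moreover have "P (amgm_defect ?A (\<lambda>j. (u j)^2))" "P (amgm_defect ?B (\<lambda>j. (u j)^2))"
    using assms by (auto intro!: amgm_defect_squares)
  moreover have "P (of_nat d * (prod u ?A - prod u ?B)^2)"
    using assms by (intro of_nat_mult_closed binomial_square prod_mem) auto
  ultimately show ?thesis
    by (simp only: add_closed)
qed

end

section \<open>Monomials\<close>

lemma in_vars_0: "in_vars n 0"
  unfolding in_vars_def by simp

lemma in_vars_add: "in_vars n \<alpha> \<Longrightarrow> in_vars n \<beta> \<Longrightarrow> in_vars n (\<alpha> + \<beta>)"
  unfolding in_vars_def using keys_add[of \<alpha> \<beta>] by blast

lemma mdeg_in_vars: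
  assumes "in_vars n \<alpha>"
  shows "mdeg \<alpha> = (\<Sum>i<n. Poly_Mapping.lookup \<alpha> i)"
  unfolding mdeg_def
  by (rule sum.mono_neutral_left) (use assms in \<open>auto simp: in_vars_def in_keys_iff\<close>)

lemma mdeg_eq_0_iff: "mdeg \<alpha> = 0 \<longleftrightarrow> \<alpha> = 0"
  by (auto simp: mdeg_def in_keys_iff intro!: poly_mapping_eqI)

lemma single_var_power:
  "Poly_Mapping.single (Poly_Mapping.single i 1) c ^ k
    = Poly_Mapping.single (Poly_Mapping.single i k) (c ^ k :: 'a::comm_semiring_1)"
proof (induction k)
  case (Suc k)
  have "Poly_Mapping.single i 1 + Poly_Mapping.single i k = Poly_Mapping.single i (Suc k)"
    by (simp add: single_add[symmetric])
  with Suc show ?case by (simp add: mult_single)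
qed simp

lemma of_nat_mult_single:
  "(of_nat m :: mpoly) * Poly_Mapping.single \<gamma> c = Poly_Mapping.single \<gamma> (real m * c)"
  by (simp add: mult_single flip: single_of_nat)

lemma prod_single:
  "(\<Prod>i\<in>A. Poly_Mapping.single (g i) (c i) :: mpoly) = Poly_Mapping.single (\<Sum>i\<in>A. g i) (\<Prod>i\<in>A. c i)"
  by (induction A rule: infinite_finite_induct) (simp_all add: mult_single)

lemma single_sum:
  "Poly_Mapping.single k (\<Sum>x\<in>A. g x) = (\<Sum>x\<in>A. Poly_Mapping.single k (g x))"
  by (induction A rule: infinite_finite_induct) (simp_all add: single_add)

lemma sum_single_lookup:
  assumes "in_vars n \<alpha>"
  shows "(\<Sum>i<n. Poly_Mapping.single i (Poly_Mapping.lookup \<alpha> i)) = \<alpha>"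
proof (rule poly_mapping_eqI)
  fix k
  show "Poly_Mapping.lookup (\<Sum>i<n. Poly_Mapping.single i (Poly_Mapping.lookup \<alpha> i)) k = Poly_Mapping.lookup \<alpha> k"
    using assms unfolding in_vars_def by (auto simp: lookup_sum lookup_single when_def in_keys_iff)
qed

lemma sum_single_keys:
  "(\<Sum>k\<in>Poly_Mapping.keys p. Poly_Mapping.single k (Poly_Mapping.lookup p k)) = p"
proof (rule poly_mapping_eqI)
  fix k
  show "Poly_Mapping.lookup (\<Sum>k\<in>Poly_Mapping.keys p. Poly_Mapping.single k (Poly_Mapping.lookup p k)) k
      = Poly_Mapping.lookup p k"
    by (auto simp: lookup_sum lookup_single when_def in_keys_iff)
qed

text \<open>The variables of X^\<alpha> with multiplicity: i occurs k i times.\<close>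

definition var_list :: "(nat \<Rightarrow> nat) \<Rightarrow> nat \<Rightarrow> nat list" where
  "var_list k n = concat (map (\<lambda>i. replicate (k i) i) [0..<n])"

lemma length_var_list: "length (var_list k n) = (\<Sum>i<n. k i)"
  by (induction n) (simp_all add: var_list_def)

lemma set_var_list: "set (var_list k n) \<subseteq> {..<n}"
  by (auto simp: var_list_def)

lemma sum_list_var_list: "sum_list (map g (var_list k n)) = (\<Sum>i<n. of_nat (k i) * g i)"
  by (induction n) (simp_all add: var_list_def sum_list_replicate)

lemma prod_list_var_list: "prod_list (map g (var_list k n)) = (\<Prod>i<n. g i ^ k i)"
  by (induction n) (simp_all add: var_list_def)

section \<open>Sums of binomial squares\<close>

lemma SOBS_0: "SOBS n 0"
  unfolding SOBS_def by (rule exI[of _ "[]"]) simp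

lemma SOBS_add:
  assumes "SOBS n p" "SOBS n q"
  shows "SOBS n (p + q)"
proof -
  obtain L M where
    "\<forall>(a, \<alpha>, b, \<beta>)\<in>set L. in_vars n \<alpha> \<and> in_vars n \<beta>"
    "p = (\<Sum>(a, \<alpha>, b, \<beta>)\<leftarrow>L. (Poly_Mapping.single \<alpha> a - Poly_Mapping.single \<beta> b)^2)"
    "\<forall>(a, \<alpha>, b, \<beta>)\<in>set M. in_vars n \<alpha> \<and> in_vars n \<beta>"
    "q = (\<Sum>(a, \<alpha>, b, \<beta>)\<leftarrow>M. (Poly_Mapping.single \<alpha> a - Poly_Mapping.single \<beta> b)^2)"
    using assms unfolding SOBS_def by blast
  then show ?thesis
    unfolding SOBS_def by (intro exI[of _ "L @ M"]) auto
qed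

lemma SOBS_sum: "(\<And>x. x \<in> A \<Longrightarrow> SOBS n (g x)) \<Longrightarrow> SOBS n (sum g A)"
  by (induction A rule: infinite_finite_induct) (auto intro: SOBS_0 SOBS_add)

lemma SOBS_binomial_square:
  assumes "in_vars n \<alpha>" "in_vars n \<beta>"
  shows "SOBS n ((Poly_Mapping.single \<alpha> a - Poly_Mapping.single \<beta> b)^2)"
  unfolding SOBS_def using assms by (intro exI[of _ "[(a, \<alpha>, b, \<beta>)]"]) simp

lemma SOBS_monomial_square_mult:
  assumes "SOBS n p" "in_vars n \<gamma>"
  shows "SOBS n ((Poly_Mapping.single \<gamma> c)^2 * p)"
proof -
  obtain L where L: "\<forall>(a, \<alpha>, b, \<beta>)\<in>set L. in_vars n \<alpha> \<and> in_vars n \<beta>"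
     "p = (\<Sum>(a, \<alpha>, b, \<beta>)\<leftarrow>L. (Poly_Mapping.single \<alpha> a - Poly_Mapping.single \<beta> b)^2)"
    using assms(1) unfolding SOBS_def by blast
  define M where "M = map (\<lambda>(a, \<alpha>, b, \<beta>). (c * a, \<gamma> + \<alpha>, c * b, \<gamma> + \<beta>)) L"
  have "(Poly_Mapping.single \<gamma> c)^2 * p = (\<Sum>(a, \<alpha>, b, \<beta>)\<leftarrow>M. (Poly_Mapping.single \<alpha> a - Poly_Mapping.single \<beta> b)^2)"
    unfolding L(2) M_def
  proof (induction L)
    case (Cons x L)
    obtain a \<alpha> b \<beta> where x: "x = (a, \<alpha>, b, \<beta>)" by (cases x) auto
    have "(Poly_Mapping.single \<gamma> c)^2 * (Poly_Mapping.single \<alpha> a - Poly_Mapping.single \<beta> b)^2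
       = (Poly_Mapping.single \<gamma> c * Poly_Mapping.single \<alpha> a - Poly_Mapping.single \<gamma> c * Poly_Mapping.single \<beta> b)^2"
      by (simp add: power2_eq_square algebra_simps)
    also have "\<dots> = (Poly_Mapping.single (\<gamma> + \<alpha>) (c * a) - Poly_Mapping.single (\<gamma> + \<beta>) (c * b))^2"
      by (simp add: mult_single)
    finally show ?case using Cons by (simp add: x distrib_left)
  qed simp
  moreover have "\<forall>(a, \<alpha>, b, \<beta>)\<in>set M. in_vars n \<alpha> \<and> in_vars n \<beta>"
    using L(1) assms(2) unfolding M_def by (auto intro: in_vars_add)
  ultimately show ?thesis unfolding SOBS_def by blast
qed

lemma SOBS_of_nat_mult_cancel:
  assumes "k > 0" "SOBS n (of_nat k * p)"
  shows "SOBS n p"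
proof -
  have "(Poly_Mapping.single 0 (sqrt (1 / real k)))^2 * (of_nat k * p)
      = Poly_Mapping.single 0 (1 / real k) * (of_nat k * p)"
    by (simp add: power2_eq_square mult_single)
  also have "\<dots> = (Poly_Mapping.single 0 (1 / real k) * Poly_Mapping.single 0 (real k)) * p"
    by (simp only: single_of_nat mult.assoc)
  also have "\<dots> = p"
    using assms(1) by (simp add: mult_single del: single_of_nat)
  finally show ?thesis
    using SOBS_monomial_square_mult[OF assms(2) in_vars_0] by metis
qed

lemma SOBS_single_even:
  assumes "in_vars n \<beta>" "\<forall>i. even (Poly_Mapping.lookup \<beta> i)" "c \<ge> 0"
  shows "SOBS n (Poly_Mapping.single \<beta> c)"
proof -
  define \<gamma> where "\<gamma> = (\<Sum>i<n. Poly_Mapping.single i (Poly_Mapping.lookup \<beta> i div 2))"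
  have "in_vars n \<gamma>"
    unfolding in_vars_def
  proof
    fix k assume "k \<in> Poly_Mapping.keys \<gamma>"
    then show "k \<in> {..<n}"
      unfolding \<gamma>_def by (auto simp: in_keys_iff lookup_sum lookup_single when_def split: if_splits)
  qed
  moreover have "\<gamma> + \<gamma> = \<beta>"
  proof -
    have "\<gamma> + \<gamma> = (\<Sum>i<n. Poly_Mapping.single i (Poly_Mapping.lookup \<beta> i))"
      unfolding \<gamma>_def sum.distrib[symmetric] single_add[symmetric]
      using assms(2) by (intro sum.cong refl) (metis add_self_div_2 even_two_times_div_two mult_2)
    then show ?thesis
      using sum_single_lookup[OF assms(1)] by simp
  qed
  then have "(Poly_Mapping.single \<gamma> (sqrt c) - Poly_Mapping.single 0 0)^2 = Poly_Mapping.single \<beta> c"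
    using assms(3) by (simp add: power2_eq_square mult_single)
  ultimately show ?thesis
    using SOBS_binomial_square[OF _ in_vars_0] by metis
qed

lemma SOBS_single_var_power:
  assumes "i < n" "c \<ge> 0"
  shows "SOBS n (Poly_Mapping.single (Poly_Mapping.single i (2*d)) c)"
  using assms by (intro SOBS_single_even) (auto simp: in_vars_def lookup_single when_def)

definition monomials :: "nat \<Rightarrow> mpoly set" where
  "monomials n = {Poly_Mapping.single \<gamma> c | \<gamma> c. in_vars n \<gamma>}"

lemma binomial_square_cone_SOBS:
  "binomial_square_cone (SOBS n) (monomials n)"
  unfolding monomials_def
proof
  show "SOBS n (p + q)" if "SOBS n p" "SOBS n q" for p q
    using that by (rule SOBS_add)
  show "SOBS n p" if "k > 0" "SOBS n (of_nat k * p)" for k p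
    using that by (rule SOBS_of_nat_mult_cancel)
  show "1 \<in> {Poly_Mapping.single \<gamma> c | \<gamma> c. in_vars n \<gamma>}"
    using in_vars_0 by (metis (mono_tags, lifting) mem_Collect_eq single_one)
  show "v * w \<in> {Poly_Mapping.single \<gamma> c | \<gamma> c. in_vars n \<gamma>}"
    if "v \<in> {Poly_Mapping.single \<gamma> c | \<gamma> c. in_vars n \<gamma>}"
      "w \<in> {Poly_Mapping.single \<gamma> c | \<gamma> c. in_vars n \<gamma>}" for v w
    using that by (force simp: mult_single intro: in_vars_add)
qed (auto simp: SOBS_0 SOBS_monomial_square_mult SOBS_binomial_square mult_single in_vars_add)

lemma SOBS_amgm_monomial:
  assumes "in_vars n \<alpha>" "mdeg \<alpha> = 2*d"
  shows "SOBS n ((\<Sum>i<n. Poly_Mapping.single (Poly_Mapping.single i (2*d))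
                          (real (Poly_Mapping.lookup \<alpha> i) * s i ^ (2*d)))
    - of_nat (2*d) * Poly_Mapping.single \<alpha> (\<Prod>i<n. s i ^ Poly_Mapping.lookup \<alpha> i))"
proof -
  define l where "l = var_list (Poly_Mapping.lookup \<alpha>) n"
  define h where "h = (\<lambda>i. Poly_Mapping.single (Poly_Mapping.single i 1) (s i) :: mpoly)"
  define u where "u = (\<lambda>j. h (l ! j))"
  have len: "length l = 2*d"
    using assms by (simp add: l_def length_var_list mdeg_in_vars)
  have "u ` {0..<2*d} \<subseteq> monomials n"
  proof
    fix y assume "y \<in> u ` {0..<2*d}"
    then obtain j where j: "j < length l" "y = u j" using len by auto
    then have "l ! j < n" using set_var_list nth_mem unfolding l_def by blast
    then show "y \<in> monomials n"
      unfolding j(2) u_def h_def monomials_def in_vars_def by auto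
  qed
  then have "SOBS n (amgm_defect {0..<2*d} u)"
    by (rule binomial_square_cone.amgm_defect_even_card[OF binomial_square_cone_SOBS])
  moreover have "(\<Sum>j\<in>{0..<2*d}. u j ^ (2*d)) = (\<Sum>i<n. Poly_Mapping.single (Poly_Mapping.single i (2*d))
                          (real (Poly_Mapping.lookup \<alpha> i) * s i ^ (2*d)))"
  proof -
    have "(\<Sum>j\<in>{0..<2*d}. u j ^ (2*d)) = sum_list (map (\<lambda>i. h i ^ (2*d)) l)"
      unfolding sum.list_conv_set_nth len u_def by (intro sum.cong) (auto simp: len)
    then show ?thesis
      unfolding l_def sum_list_var_list h_def single_var_power of_nat_mult_single .
  qed
  moreover have "prod u {0..<2*d} = Poly_Mapping.single \<alpha> (\<Prod>i<n. s i ^ Poly_Mapping.lookup \<alpha> i)"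
  proof -
    have "prod u {0..<2*d} = prod_list (map h l)"
      unfolding prod.list_conv_set_nth len u_def by (intro prod.cong) (auto simp: len)
    then show ?thesis
      unfolding l_def prod_list_var_list h_def single_var_power prod_single sum_single_lookup[OF assms(1)] .
  qed
  ultimately show ?thesis
    by (simp add: amgm_defect_def)
qed

section \<open>Agiforms\<close>

lemma prod_power_sign_flip:
  assumes "in_vars n \<alpha>" "c < 0 \<or> (\<exists>i. odd (Poly_Mapping.lookup \<alpha> i))"
  obtains e :: "nat \<Rightarrow> real" where "\<forall>i. (e i)^2 = 1"
    "(\<Prod>i<n. e i ^ Poly_Mapping.lookup \<alpha> i) * \<bar>c\<bar> = - c"
proof (cases "c < 0")
  case True
  then show ?thesis
    using that[of "\<lambda>_. 1"] by simp
next
  case False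
  then obtain k where k: "odd (Poly_Mapping.lookup \<alpha> k)"
    using assms(2) by blast
  then have "k \<in> Poly_Mapping.keys \<alpha>"
    using odd_pos[OF k] by (simp add: in_keys_iff)
  then have "k < n"
    using assms(1) by (auto simp: in_vars_def)
  then have "(\<Prod>i<n. (if i = k then -1 else 1) ^ Poly_Mapping.lookup \<alpha> i) = (-1 :: real) ^ Poly_Mapping.lookup \<alpha> k"
    by (simp add: prod.remove[of "{..<n}" k] prod.neutral)
  then show ?thesis
    using that[of "\<lambda>i. if i = k then -1 else 1"] k False by simp
qed

lemma amgm_root_scaling:
  assumes "d \<ge> 1" "\<forall>i<n. a i \<ge> 0"
    and eq: "real (2*d) ^ (2*d) * vpow n a \<alpha> = c ^ (2*d) * vpow n (\<lambda>i. real (Poly_Mapping.lookup \<alpha> i)) \<alpha>"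
  obtains t :: "nat \<Rightarrow> real" where "\<forall>i<n. real (Poly_Mapping.lookup \<alpha> i) * t i ^ (2*d) \<le> a i"
    "(\<Prod>i<n. t i ^ Poly_Mapping.lookup \<alpha> i) = \<bar>c\<bar> / real (2*d)"
proof
  define al where "al = (\<lambda>i. real (Poly_Mapping.lookup \<alpha> i))"
  \<comment> \<open>if \<alpha>_i = 0 then t_i = 0 by the convention x / 0 = 0, harmless since t_i occurs as t_i^0\<close>
  define t where "t = (\<lambda>i. root (2*d) (a i / al i))"
  have ht: "t i ^ (2*d) = a i / al i" if "i < n" for i
    unfolding t_def using assms(1,2) that by (simp add: al_def)
  then show "\<forall>i<n. real (Poly_Mapping.lookup \<alpha> i) * t i ^ (2*d) \<le> a i"
    using assms(2) by (simp add: al_def)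
  have "(\<Prod>i<n. t i ^ Poly_Mapping.lookup \<alpha> i) ^ (2*d) = (\<Prod>i<n. (t i ^ (2*d)) ^ Poly_Mapping.lookup \<alpha> i)"
    unfolding prod_power_distrib by (intro prod.cong refl) (simp only: power_mult[symmetric] mult.commute)
  also have "\<dots> = vpow n a \<alpha> / vpow n al \<alpha>"
    unfolding vpow_def by (simp add: ht power_divide prod_dividef)
  also have "\<dots> = (\<bar>c\<bar> / real (2*d)) ^ (2*d)"
  proof -
    have "vpow n al \<alpha> > 0"
      unfolding vpow_def al_def by (intro prod_pos) (auto simp: zero_less_power_eq)
    moreover have "vpow n a \<alpha> = c ^ (2*d) * vpow n al \<alpha> / real (2*d) ^ (2*d)"
      using eq assms(1) unfolding al_def by (simp add: field_simps)
    ultimately show ?thesis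
      by (simp add: power_divide power_even_abs)
  qed
  finally show "(\<Prod>i<n. t i ^ Poly_Mapping.lookup \<alpha> i) = \<bar>c\<bar> / real (2*d)"
    by (rule power_eq_imp_eq_base)
      (use assms in \<open>auto simp: t_def al_def intro!: prod_nonneg\<close>)
qed

lemma SOBS_agiform:
  assumes "d \<ge> 1" "in_vars n \<alpha>" "mdeg \<alpha> = 2*d" "\<forall>i<n. a i \<ge> 0"
    and "real (2*d) ^ (2*d) * vpow n a \<alpha> = c ^ (2*d) * vpow n (\<lambda>i. real (Poly_Mapping.lookup \<alpha> i)) \<alpha>"
    and "c < 0 \<or> (\<exists>i. odd (Poly_Mapping.lookup \<alpha> i))"
  shows "SOBS n ((\<Sum>i<n. Poly_Mapping.single (Poly_Mapping.single i (2*d)) (a i)) + Poly_Mapping.single \<alpha> c)"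
proof -
  obtain e where e: "\<forall>i. (e i)^2 = 1" "(\<Prod>i<n. e i ^ Poly_Mapping.lookup \<alpha> i) * \<bar>c\<bar> = - c"
    using prod_power_sign_flip[OF assms(2,6)] by blast
  obtain t where t: "\<forall>i<n. real (Poly_Mapping.lookup \<alpha> i) * t i ^ (2*d) \<le> a i"
    "(\<Prod>i<n. t i ^ Poly_Mapping.lookup \<alpha> i) = \<bar>c\<bar> / real (2*d)"
    using amgm_root_scaling[OF assms(1,4,5)] by blast
  define s where "s = (\<lambda>i. e i * t i)"
  define X :: "nat \<Rightarrow> nat \<Rightarrow>\<^sub>0 nat" where "X = (\<lambda>i. Poly_Mapping.single i (2*d))"
  have "s i ^ (2*d) = t i ^ (2*d)" for i
    using e(1) by (simp add: s_def power_mult_distrib power_mult)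
  then have rest: "SOBS n (\<Sum>i<n. Poly_Mapping.single (X i)
      (a i - real (Poly_Mapping.lookup \<alpha> i) * s i ^ (2*d)))"
    using t(1) unfolding X_def by (intro SOBS_sum SOBS_single_var_power) auto
  have "of_nat (2*d) * Poly_Mapping.single \<alpha> (\<Prod>i<n. s i ^ Poly_Mapping.lookup \<alpha> i)
      = - Poly_Mapping.single \<alpha> c"
  proof -
    have "(\<Prod>i<n. s i ^ Poly_Mapping.lookup \<alpha> i) = - c / real (2*d)"
      using e(2) t(2) by (simp add: s_def power_mult_distrib prod.distrib times_divide_eq_right)
    then show ?thesis
      unfolding of_nat_mult_single using assms(1) by (simp add: single_uminus)
  qed
  then have "(\<Sum>i<n. Poly_Mapping.single (X i) (a i)) + Poly_Mapping.single \<alpha> c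
      = ((\<Sum>i<n. Poly_Mapping.single (X i) (real (Poly_Mapping.lookup \<alpha> i) * s i ^ (2*d)))
         - of_nat (2*d) * Poly_Mapping.single \<alpha> (\<Prod>i<n. s i ^ Poly_Mapping.lookup \<alpha> i))
        + (\<Sum>i<n. Poly_Mapping.single (X i) (a i - real (Poly_Mapping.lookup \<alpha> i) * s i ^ (2*d)))"
    by (simp add: single_diff sum_subtractf)
  with SOBS_add[OF SOBS_amgm_monomial[OF assms(2,3)] rest] show ?thesis
    unfolding X_def by simp
qed

section \<open>Decomposition of the form\<close>

lemma form_eq_pure_powers_plus_Omega:
  fixes f :: mpoly
  assumes "d \<ge> 1" "is_form (2*d) f"
  shows "f = (\<Sum>i<n. Poly_Mapping.single (Poly_Mapping.single i (2*d))
                       (Poly_Mapping.lookup f (Poly_Mapping.single i (2*d))))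
           + (\<Sum>\<beta>\<in>Omega n d f. Poly_Mapping.single \<beta> (Poly_Mapping.lookup f \<beta>))"
proof -
  define X :: "nat \<Rightarrow> nat \<Rightarrow>\<^sub>0 nat" where "X = (\<lambda>i. Poly_Mapping.single i (2*d))"
  define g where "g = (\<lambda>\<beta>. Poly_Mapping.single \<beta> (Poly_Mapping.lookup f \<beta>))"
  have "0 \<notin> Poly_Mapping.keys f"
    using assms by (auto simp: is_form_def mdeg_def)
  then have Omega: "Omega n d f = Poly_Mapping.keys f - X ` {..<n}"
    unfolding Omega_def X_def by blast
  have "inj_on X {..<n}"
  proof
    fix i j assume "X i = X j"
    then have "Poly_Mapping.lookup (X i) i = Poly_Mapping.lookup (X j) i"
      by simp
    then show "i = j"
      using assms(1) by (auto simp: X_def lookup_single when_def split: if_splits)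
  qed
  then have "(\<Sum>i<n. g (X i)) = sum g (X ` {..<n})"
    by (simp add: sum.reindex)
  also have "\<dots> = sum g (Poly_Mapping.keys f \<inter> X ` {..<n})"
    by (rule sum.mono_neutral_right) (auto simp: g_def in_keys_iff)
  finally have "f = (\<Sum>i<n. g (X i)) + sum g (Omega n d f)"
    unfolding Omega using sum.Int_Diff[of "Poly_Mapping.keys f" g "X ` {..<n}"]
    by (simp add: g_def sum_single_keys)
  then show ?thesis
    unfolding g_def X_def .
qed

lemma form_decomposition:
  fixes f :: mpoly and a :: "(nat \<Rightarrow>\<^sub>0 nat) \<Rightarrow> nat \<Rightarrow> real"
  assumes "d \<ge> 1" "is_form (2*d) f" "D \<subseteq> Omega n d f"
  shows "f = (\<Sum>i<n. Poly_Mapping.single (Poly_Mapping.single i (2*d))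
                       (Poly_Mapping.lookup f (Poly_Mapping.single i (2*d)) - (\<Sum>\<alpha>\<in>D. a \<alpha> i)))
           + (\<Sum>\<beta>\<in>Omega n d f - D. Poly_Mapping.single \<beta> (Poly_Mapping.lookup f \<beta>))
           + (\<Sum>\<alpha>\<in>D. (\<Sum>i<n. Poly_Mapping.single (Poly_Mapping.single i (2*d)) (a \<alpha> i))
                      + Poly_Mapping.single \<alpha> (Poly_Mapping.lookup f \<alpha>))"
proof -
  have "finite (Omega n d f)"
    by (simp add: Omega_def)
  then have "(\<Sum>\<beta>\<in>Omega n d f. Poly_Mapping.single \<beta> (Poly_Mapping.lookup f \<beta>))
      = (\<Sum>\<beta>\<in>Omega n d f - D. Poly_Mapping.single \<beta> (Poly_Mapping.lookup f \<beta>))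
        + (\<Sum>\<alpha>\<in>D. Poly_Mapping.single \<alpha> (Poly_Mapping.lookup f \<alpha>))"
    using assms(3) by (simp add: sum.subset_diff)
  moreover have "(\<Sum>i<n. Poly_Mapping.single (Poly_Mapping.single i (2*d)) (\<Sum>\<alpha>\<in>D. a \<alpha> i))
      = (\<Sum>\<alpha>\<in>D. \<Sum>i<n. Poly_Mapping.single (Poly_Mapping.single i (2*d)) (a \<alpha> i))"
    unfolding single_sum by (rule sum.swap)
  ultimately show ?thesis
    using form_eq_pure_powers_plus_Omega[OF assms(1,2), of n]
    by (simp add: single_diff sum_subtractf sum.distrib algebra_simps)
qed

lemma SOBS_sum_Omega_diff_Delta:
  assumes "is_poly_in n f"
  shows "SOBS n (\<Sum>\<beta>\<in>Omega n d f - Delta n d f. Poly_Mapping.single \<beta> (Poly_Mapping.lookup f \<beta>))"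
proof (rule SOBS_sum)
  fix \<beta> assume \<beta>: "\<beta> \<in> Omega n d f - Delta n d f"
  then have "in_vars n \<beta>"
    using assms by (auto simp: Omega_def is_poly_in_def)
  moreover have "\<forall>i. even (Poly_Mapping.lookup \<beta> i)" "Poly_Mapping.lookup f \<beta> \<ge> 0"
    using \<beta> by (auto simp: Delta_def)
  ultimately show "SOBS n (Poly_Mapping.single \<beta> (Poly_Mapping.lookup f \<beta>))"
    by (rule SOBS_single_even)
qed

lemma SOBS_sum_Delta_agiforms:
  assumes "d \<ge> 1" "is_poly_in n f" "is_form (2*d) f"
    and "\<forall>\<alpha>\<in>Delta n d f. \<forall>i<n. a \<alpha> i \<ge> 0"
    and "\<forall>\<alpha>\<in>Delta n d f. real (2*d) ^ (2*d) * vpow n (a \<alpha>) \<alpha>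
            = (Poly_Mapping.lookup f \<alpha>) ^ (2*d) * vpow n (\<lambda>i. real (Poly_Mapping.lookup \<alpha> i)) \<alpha>"
  shows "SOBS n (\<Sum>\<alpha>\<in>Delta n d f. (\<Sum>i<n. Poly_Mapping.single (Poly_Mapping.single i (2*d)) (a \<alpha> i))
                                     + Poly_Mapping.single \<alpha> (Poly_Mapping.lookup f \<alpha>))"
proof (rule SOBS_sum)
  fix \<alpha> assume "\<alpha> \<in> Delta n d f"
  then show "SOBS n ((\<Sum>i<n. Poly_Mapping.single (Poly_Mapping.single i (2*d)) (a \<alpha> i))
                      + Poly_Mapping.single \<alpha> (Poly_Mapping.lookup f \<alpha>))"
    using assms by (intro SOBS_agiform) (auto simp: Delta_def Omega_def is_poly_in_def is_form_def)
qed

theorem theorem2p3: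
  fixes n d :: nat and f :: mpoly and a :: "(nat \<Rightarrow>\<^sub>0 nat) \<Rightarrow> nat \<Rightarrow> real"
  assumes "n \<ge> 1"
    and "is_poly_in n f"
    and "is_form (2*d) f"
    and "\<forall>\<alpha>\<in>Delta n d f. \<forall>i<n. a \<alpha> i \<ge> 0"
    and "\<forall>\<alpha>\<in>Delta n d f. real (2*d) ^ (2*d) * vpow n (a \<alpha>) \<alpha>
            = (Poly_Mapping.lookup f \<alpha>) ^ (2*d) * vpow n (\<lambda>i. real (Poly_Mapping.lookup \<alpha> i)) \<alpha>"
    and "\<forall>i<n. Poly_Mapping.lookup f (Poly_Mapping.single i (2*d)) \<ge> (\<Sum>\<alpha>\<in>Delta n d f. a \<alpha> i)"
  shows "SOBS n f"
proof (cases "d = 0")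
  case True
  \<comment> \<open>all X_i^{2d} coincide with the constant monomial, so f is a constant\<close>
  then have keys: "Poly_Mapping.keys f \<subseteq> {0}"
    using assms(3) by (auto simp: is_form_def mdeg_eq_0_iff)
  then have "Delta n d f = {}"
    by (auto simp: Delta_def Omega_def)
  then have "Poly_Mapping.lookup f 0 \<ge> 0"
    using assms(6)[rule_format, of 0] assms(1) True by simp
  then have "SOBS n (Poly_Mapping.single 0 (Poly_Mapping.lookup f 0))"
    by (intro SOBS_single_even in_vars_0) simp_all
  moreover have "Poly_Mapping.single 0 (Poly_Mapping.lookup f 0) = f"
    using sum_single_keys[of f] keys by (auto simp: subset_singleton_iff)
  ultimately show ?thesis
    by simp
next
  case False
  then have "d \<ge> 1" by simp
  have "Delta n d f \<subseteq> Omega n d f"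
    by (auto simp: Delta_def)
  note decomposition = form_decomposition[OF \<open>d \<ge> 1\<close> assms(3) this, of a]
  have "SOBS n (\<Sum>i<n. Poly_Mapping.single (Poly_Mapping.single i (2*d))
      (Poly_Mapping.lookup f (Poly_Mapping.single i (2*d)) - (\<Sum>\<alpha>\<in>Delta n d f. a \<alpha> i)))"
    using assms(6) by (intro SOBS_sum SOBS_single_var_power) auto
  then show ?thesis
    by (subst decomposition)
      (intro SOBS_add SOBS_sum_Omega_diff_Delta SOBS_sum_Delta_agiforms \<open>d \<ge> 1\<close> assms(2-5))
qed

end
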